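(* For any two graphons $w,w'$, $|\delta(w)-\delta(w')|\le 2\sqrt{\delta_{\square}(w,w')}$. In particular, the degeneracy is continuous with respect to the cut metric.
   Context: A graphon is a Lebesgue-measurable symmetric function $w:[0,1]^2\to[0,1]$. For a measurable $K\subseteq[0,1]$ let $d_w^K(x)=\int_K w(x,y)\,\mathrm{d}y$ and $d_w(x)=d_w^{[0,1]}(x)$. For $\kappa\in[0,1]$ define recursively $K^{1}_{\kappa}(w)=\{x: d_w(x)\ge\kappa\}$ and $K^{n+1}_{\kappa}(w)=\{x\in K^{n}_{\kappa}(w): d_w^{K^{n}_{\kappa}(w)}(x)\ge\kappa\}$, the $\kappa$-core is $K_{\kappa}(w)=\bigcap_{n\ge1}K^{n}_{\kappa}(w)$, and the degeneracy is $\delta(w)=\sup\{\kappa\in[0,1]: |K_\kappa(w)|>0\}$ ($|\cdot|$ Lebesgue measure). A map $\sigma:[0,1]\to[0,1]$ is measure-preserving if it is measurable and $|\sigma^{-1}(A)|=|A|$ for all measurable $A$; then $w^\sigma(x,y)=w(\sigma(x),\sigma(y))$. Define $d_\square(w,w')=\sup_{S,T\subseteq[0,1]}\left|\int_S\int_T (w(x,y)-w'(x,y))\,\mathrm{d}y\,\mathrm{d}x\right|$ (over measurable $S,T$) and the cut metric $\delta_\square(w,w')=\inf_\sigma d_\square(w^\sigma,w')$, the infimum over all measure-preserving maps $\sigma$. *)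

theory Defs
  imports "HOL-Analysis.Analysis"
begin

text \<open>Graphons are represented as curried functions real => real => real; only their
values on the unit square matter. Lebesgue measure is the measure lebesgue on reals.\<close>

definition graphon :: "(real \<Rightarrow> real \<Rightarrow> real) \<Rightarrow> bool" where
  "graphon w \<longleftrightarrow>
     (\<lambda>(x, y). w x y) \<in> borel_measurable (lebesgue_on ({0..1} \<times> {0..1})) \<and>
     (\<forall>x\<in>{0..1}. \<forall>y\<in>{0..1}. w x y = w y x) \<and>
     (\<forall>x\<in>{0..1}. \<forall>y\<in>{0..1}. 0 \<le> w x y \<and> w x y \<le> 1)"

definition deg_on :: "(real \<Rightarrow> real \<Rightarrow> real) \<Rightarrow> real set \<Rightarrow> real \<Rightarrow> real" where
  "deg_on w K x = (LINT y:K|lebesgue. w x y)"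

definition core_step :: "real \<Rightarrow> (real \<Rightarrow> real \<Rightarrow> real) \<Rightarrow> real set \<Rightarrow> real set" where
  "core_step \<kappa> w K = {x \<in> K. deg_on w K x \<ge> \<kappa>}"

text \<open>K^n_kappa(w) for n >= 1; K^1 = core_step applied to [0,1] (d_w = d_w^[0,1]).\<close>
definition core_iter :: "nat \<Rightarrow> real \<Rightarrow> (real \<Rightarrow> real \<Rightarrow> real) \<Rightarrow> real set" where
  "core_iter n \<kappa> w = (core_step \<kappa> w ^^ n) {0..1}"

definition core :: "real \<Rightarrow> (real \<Rightarrow> real \<Rightarrow> real) \<Rightarrow> real set" where
  "core \<kappa> w = (\<Inter>n\<in>{1..}. core_iter n \<kappa> w)"

definition degeneracy :: "(real \<Rightarrow> real \<Rightarrow> real) \<Rightarrow> real" where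
  "degeneracy w = Sup {\<kappa> \<in> {0..1}. emeasure lebesgue (core \<kappa> w) > 0}"

definition measure_preserving_unit :: "(real \<Rightarrow> real) \<Rightarrow> bool" where
  "measure_preserving_unit \<sigma> \<longleftrightarrow>
     \<sigma> \<in> lebesgue_on {0..1} \<rightarrow>\<^sub>M lebesgue_on {0..1} \<and>
     (\<forall>A. A \<in> sets lebesgue \<and> A \<subseteq> {0..1} \<longrightarrow>
        emeasure lebesgue (\<sigma> -` A \<inter> {0..1}) = emeasure lebesgue A)"

definition cut_norm_dist :: "(real \<Rightarrow> real \<Rightarrow> real) \<Rightarrow> (real \<Rightarrow> real \<Rightarrow> real) \<Rightarrow> real" where
  "cut_norm_dist w w' = Sup {\<bar>LINT x:S|lebesgue. LINT y:T|lebesgue. (w x y - w' x y)\<bar> | S T.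
       S \<in> sets lebesgue \<and> S \<subseteq> {0..1} \<and> T \<in> sets lebesgue \<and> T \<subseteq> {0..1}}"

definition cut_metric :: "(real \<Rightarrow> real \<Rightarrow> real) \<Rightarrow> (real \<Rightarrow> real \<Rightarrow> real) \<Rightarrow> real" where
  "cut_metric w w' = Inf {cut_norm_dist (\<lambda>x y. w (\<sigma> x) (\<sigma> y)) w' | \<sigma>. measure_preserving_unit \<sigma>}"

end

theory Submission
  imports Defs
begin

text \<open>
  Fix a measure-preserving \<sigma>, let c be the cut distance between w^\<sigma> and w', and let c < s^2.
  If the \<kappa>-core C of w has positive measure, then K = \<sigma>^-1(C) has measure at least \<kappa>, and
  almost every point of K has w^\<sigma>-degree at least \<kappa> into K. The points B of K whose
  w'-degree into K is below \<kappa> - s satisfy s |B| \<le> \<integral>_B \<integral>_K (w^\<sigma> - w') \<le> c < s^2, so |B| < s.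
  Removing B from K lowers every w'-degree by less than s, which leaves a set of measure greater
  than \<kappa> - s > 0 on which all w'-degrees into the set are at least \<kappa> - 2s; such a set lies in the
  (\<kappa> - 2s)-core of w'. Hence \<delta>(w) \<le> \<delta>(w') + 2s, and symmetrically \<delta>(w') \<le> \<delta>(w) + 2s.
\<close>

lemma (in finite_measure) set_integrable_bounded:
  fixes f :: "'a \<Rightarrow> real"
  assumes "f \<in> borel_measurable M" "\<And>y. y \<in> space M \<Longrightarrow> \<bar>f y\<bar> \<le> B" "A \<in> sets M"
  shows "set_integrable M A f"
  unfolding set_integrable_def
  using assms by (intro integrable_mult_indicator integrable_const_bound[where B=B]) auto

lemma (in finite_measure) abs_set_integral_le_measure:
  fixes f :: "'a \<Rightarrow> real"
  assumes "A \<in> sets M" "\<And>y. y \<in> A \<Longrightarrow> \<bar>f y\<bar> \<le> 1"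
  shows "\<bar>LINT y:A|M. f y\<bar> \<le> measure M A"
proof (cases "set_integrable M A f")
  case True
  have "\<bar>LINT y:A|M. f y\<bar> \<le> (LINT y:A|M. \<bar>f y\<bar>)"
    using integral_abs_bound[of M "\<lambda>y. indicator A y * f y"]
    by (simp add: set_lebesgue_integral_def abs_mult)
  also have "\<dots> \<le> (LINT y:A|M. 1)"
    using True assms set_integrable_bounded[of "\<lambda>_. 1" 1 A]
    by (intro set_integral_mono set_integrable_abs) auto
  also have "\<dots> = measure M A"
    using assms by (simp add: set_integral_const)
  finally show ?thesis .
next
  case False
  then show ?thesis by (simp add: set_lebesgue_integral_def set_integrable_def not_integrable_integral_eq)
qed

lemma set_integral_Diff_split:
  fixes f :: "'a \<Rightarrow> real"
  assumes "set_integrable M K f" "K \<in> sets M" "L \<in> sets M" "L \<subseteq> K"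
  shows "(LINT y:K|M. f y) = (LINT y:L|M. f y) + (LINT y:K - L|M. f y)"
proof -
  have "(LINT y:K|M. f y) = (LINT y:L \<union> (K - L)|M. f y)"
    using assms(4) by (simp add: Un_absorb1)
  also have "\<dots> = (LINT y:L|M. f y) + (LINT y:K - L|M. f y)"
    using assms by (intro set_integral_Un set_integrable_subset[OF assms(1)]) auto
  finally show ?thesis .
qed

lemma set_integral_mono_set:
  fixes f :: "'a \<Rightarrow> real"
  assumes "set_integrable M K f" "K \<in> sets M" "L \<in> sets M" "L \<subseteq> K"
    and "\<And>y. y \<in> K \<Longrightarrow> 0 \<le> f y"
  shows "(LINT y:L|M. f y) \<le> (LINT y:K|M. f y)"
proof -
  have "0 \<le> (LINT y:K - L|M. f y)"
    unfolding set_lebesgue_integral_def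
    using assms(5) by (intro Bochner_Integration.integral_nonneg) (simp add: indicator_def)
  then show ?thesis
    using set_integral_Diff_split[OF assms(1-4)] by simp
qed

section \<open>Lebesgue measure on the unit interval\<close>

abbreviation unit_lebesgue :: "real measure" where
  "unit_lebesgue \<equiv> lebesgue_on {0..1}"

lemma space_unit_lebesgue [simp]: "space unit_lebesgue = {0..1}"
  by (simp add: space_restrict_space)

lemma sets_unit_lebesgue_iff: "A \<in> sets unit_lebesgue \<longleftrightarrow> A \<in> sets lebesgue \<and> A \<subseteq> {0..1}"
  by (auto simp: sets_restrict_space_iff)

lemma emeasure_unit_lebesgue:
  "A \<in> sets unit_lebesgue \<Longrightarrow> emeasure unit_lebesgue A = emeasure lebesgue A"
  by (simp add: emeasure_restrict_space sets_unit_lebesgue_iff)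

interpretation unit_lebesgue: finite_measure unit_lebesgue
  by (rule finite_measureI) (simp add: emeasure_restrict_space)

lemma measure_unit_lebesgue_le_one: "measure unit_lebesgue A \<le> 1"
  using unit_lebesgue.bounded_measure[of A] by (simp add: measure_restrict_space)

lemma emeasure_lebesgue_pos_iff:
  assumes "A \<in> sets unit_lebesgue"
  shows "0 < emeasure lebesgue A \<longleftrightarrow> 0 < measure unit_lebesgue A"
proof -
  have "emeasure lebesgue A = ennreal (measure unit_lebesgue A)"
    using assms by (simp add: emeasure_unit_lebesgue[symmetric] unit_lebesgue.emeasure_eq_measure)
  then show ?thesis by simp
qed

lemma set_integral_unit_lebesgue:
  fixes f :: "real \<Rightarrow> real"
  assumes "K \<in> sets unit_lebesgue"
  shows "(LINT y:K|lebesgue. f y) = (LINT y:K|unit_lebesgue. f y)"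
proof -
  have "(LINT y:K|unit_lebesgue. f y) = (LINT y:K|lebesgue. indicator {0..1} y *\<^sub>R f y)"
    by (rule set_integral_restrict_space) simp
  also have "\<dots> = (LINT y:K|lebesgue. f y)"
    using assms by (intro set_lebesgue_integral_cong) (auto simp: sets_unit_lebesgue_iff)
  finally show ?thesis ..
qed

lemma deg_on_unit_lebesgue:
  fixes u :: "real \<Rightarrow> real \<Rightarrow> real"
  shows "K \<in> sets unit_lebesgue \<Longrightarrow> deg_on u K x = (LINT y:K|unit_lebesgue. u x y)"
  unfolding deg_on_def by (rule set_integral_unit_lebesgue)

lemma borel_measurable_unit_lebesgue_AE_cong:
  fixes f g :: "real \<Rightarrow> real"
  assumes f: "f \<in> borel_measurable unit_lebesgue" and ae: "AE x in unit_lebesgue. f x = g x"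
  shows "g \<in> borel_measurable unit_lebesgue"
proof -
  have "(\<lambda>x. indicator {0..1} x *\<^sub>R f x) \<in> borel_measurable lebesgue"
    using f by (simp add: borel_measurable_restrict_space_iff)
  moreover have "AE x in lebesgue. indicator {0..1} x *\<^sub>R f x = indicator {0..1} x *\<^sub>R g x"
    using ae by (auto simp: AE_restrict_space_iff indicator_def elim!: eventually_mono)
  ultimately have "(\<lambda>x. indicator {0..1} x *\<^sub>R g x) \<in> borel_measurable lebesgue"
    by (rule borel_measurable_AE)
  then show ?thesis by (simp add: borel_measurable_restrict_space_iff)
qed

lemma measurable_unit_lebesgue_borel: "(\<lambda>x. x) \<in> unit_lebesgue \<rightarrow>\<^sub>M borel"
  by (intro measurable_restrict_space1 measurable_completion) simp

lemma AE_unit_lebesgue_if_AE_lborel: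
  assumes "AE x in lborel. P x"
  shows "AE x in unit_lebesgue. P x"
proof -
  have "AE x in lebesgue. P x" using assms by (rule AE_completion)
  then show ?thesis by (subst AE_restrict_space_iff) (auto elim: eventually_mono)
qed

lemma measure_preserving_unit_measurable:
  "measure_preserving_unit \<sigma> \<Longrightarrow> \<sigma> \<in> unit_lebesgue \<rightarrow>\<^sub>M unit_lebesgue"
  by (simp add: measure_preserving_unit_def)

lemma measure_preserving_unit_range:
  "measure_preserving_unit \<sigma> \<Longrightarrow> x \<in> {0..1} \<Longrightarrow> \<sigma> x \<in> {0..1}"
  using measurable_space[OF measure_preserving_unit_measurable] by fastforce

lemma measure_preserving_unit_vimage_sets:
  "measure_preserving_unit \<sigma> \<Longrightarrow> A \<in> sets unit_lebesgue \<Longrightarrow> \<sigma> -` A \<inter> {0..1} \<in> sets unit_lebesgue"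
  using measurable_sets[OF measure_preserving_unit_measurable] by fastforce

lemma distr_measure_preserving_unit:
  assumes "measure_preserving_unit \<sigma>"
  shows "distr unit_lebesgue unit_lebesgue \<sigma> = unit_lebesgue"
proof (rule measure_eqI)
  fix A assume "A \<in> sets (distr unit_lebesgue unit_lebesgue \<sigma>)"
  then have A: "A \<in> sets unit_lebesgue" by simp
  have "emeasure (distr unit_lebesgue unit_lebesgue \<sigma>) A = emeasure unit_lebesgue (\<sigma> -` A \<inter> {0..1})"
    using A assms by (simp add: emeasure_distr measure_preserving_unit_measurable)
  also have "\<dots> = emeasure lebesgue (\<sigma> -` A \<inter> {0..1})"
    by (rule emeasure_unit_lebesgue[OF measure_preserving_unit_vimage_sets[OF assms A]])
  also have "\<dots> = emeasure unit_lebesgue A"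
    using A assms by (simp add: measure_preserving_unit_def sets_unit_lebesgue_iff emeasure_unit_lebesgue)
  finally show "emeasure (distr unit_lebesgue unit_lebesgue \<sigma>) A = emeasure unit_lebesgue A" .
qed simp

lemma emeasure_vimage_measure_preserving_unit:
  assumes "measure_preserving_unit \<sigma>" "A \<in> sets unit_lebesgue"
  shows "emeasure unit_lebesgue (\<sigma> -` A \<inter> {0..1}) = emeasure unit_lebesgue A"
  using emeasure_distr[OF measure_preserving_unit_measurable[OF assms(1)], of A] assms
  by (simp add: distr_measure_preserving_unit)

lemma measure_vimage_measure_preserving_unit:
  "measure_preserving_unit \<sigma> \<Longrightarrow> A \<in> sets unit_lebesgue \<Longrightarrow>
    measure unit_lebesgue (\<sigma> -` A \<inter> {0..1}) = measure unit_lebesgue A"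
  by (simp add: measure_def emeasure_vimage_measure_preserving_unit)

lemma AE_measure_preserving_unit:
  assumes "measure_preserving_unit \<sigma>" "AE x in unit_lebesgue. P x"
  shows "AE x in unit_lebesgue. P (\<sigma> x)"
proof -
  have "AE x in distr unit_lebesgue unit_lebesgue \<sigma>. P x"
    unfolding distr_measure_preserving_unit[OF assms(1)] by (rule assms(2))
  then show ?thesis by (rule AE_distrD[OF measure_preserving_unit_measurable[OF assms(1)]])
qed

lemma null_sets_vimage_measure_preserving_unit:
  "measure_preserving_unit \<sigma> \<Longrightarrow> N \<in> null_sets unit_lebesgue \<Longrightarrow>
    \<sigma> -` N \<inter> {0..1} \<in> null_sets unit_lebesgue"
  by (auto simp: null_sets_def emeasure_vimage_measure_preserving_unit
      measure_preserving_unit_vimage_sets)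

lemma measure_preserving_unit_id: "measure_preserving_unit (\<lambda>x. x)"
  by (auto simp: measure_preserving_unit_def Int_absorb2)

lemma set_integral_measure_preserving_unit:
  fixes f :: "real \<Rightarrow> real"
  assumes \<sigma>: "measure_preserving_unit \<sigma>" and f: "f \<in> borel_measurable unit_lebesgue"
    and A: "A \<in> sets unit_lebesgue"
  shows "(LINT y:\<sigma> -` A \<inter> {0..1}|unit_lebesgue. f (\<sigma> y)) = (LINT z:A|unit_lebesgue. f z)"
proof -
  have "(LINT z:A|unit_lebesgue. f z) = (LINT z:A|distr unit_lebesgue unit_lebesgue \<sigma>. f z)"
    by (simp add: distr_measure_preserving_unit[OF \<sigma>])
  also have "\<dots> = (LINT y|unit_lebesgue. indicator A (\<sigma> y) * f (\<sigma> y))"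
    unfolding set_lebesgue_integral_def using A f
    by (subst integral_distr[OF measure_preserving_unit_measurable[OF \<sigma>]]) auto
  also have "\<dots> = (LINT y:\<sigma> -` A \<inter> {0..1}|unit_lebesgue. f (\<sigma> y))"
    unfolding set_lebesgue_integral_def
    by (intro Bochner_Integration.integral_cong) (auto simp: indicator_def)
  finally show ?thesis ..
qed

lemma deg_on_measure_preserving_unit:
  fixes u :: "real \<Rightarrow> real \<Rightarrow> real"
  assumes "measure_preserving_unit \<sigma>" "u (\<sigma> x) \<in> borel_measurable unit_lebesgue"
    and "C \<in> sets unit_lebesgue"
  shows "deg_on (\<lambda>x y. u (\<sigma> x) (\<sigma> y)) (\<sigma> -` C \<inter> {0..1}) x = deg_on u C (\<sigma> x)"
  using assms
  by (simp add: deg_on_unit_lebesgue measure_preserving_unit_vimage_sets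
      set_integral_measure_preserving_unit)

lemma cut_norm_dist_commute: "cut_norm_dist u v = cut_norm_dist v u"
proof -
  have neg: "(LINT x:A|lebesgue. - f x) = - (LINT x:A|lebesgue. f x)" for A and f :: "real \<Rightarrow> real"
    unfolding set_lebesgue_integral_def by simp
  have inner: "(LINT y:T|lebesgue. (v x y - u x y)) = - (LINT y:T|lebesgue. (u x y - v x y))" for x T
    using neg[of T "\<lambda>y. u x y - v x y"] by simp
  have "\<bar>LINT x:S|lebesgue. LINT y:T|lebesgue. (v x y - u x y)\<bar>
      = \<bar>LINT x:S|lebesgue. LINT y:T|lebesgue. (u x y - v x y)\<bar>" for S T
    using neg[of S "\<lambda>x. LINT y:T|lebesgue. (u x y - v x y)"] by (simp add: inner)
  then show ?thesis unfolding cut_norm_dist_def by simp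
qed

lemma abs_cut_integral_le_cut_norm_dist:
  fixes u v :: "real \<Rightarrow> real \<Rightarrow> real"
  assumes uv: "\<And>x y. x \<in> {0..1} \<Longrightarrow> y \<in> {0..1} \<Longrightarrow> \<bar>u x y - v x y\<bar> \<le> 1"
    and S: "S \<in> sets unit_lebesgue" and T: "T \<in> sets unit_lebesgue"
  shows "\<bar>LINT x:S|lebesgue. LINT y:T|lebesgue. (u x y - v x y)\<bar> \<le> cut_norm_dist u v"
proof -
  have le_one: "\<bar>LINT x:S|lebesgue. LINT y:T|lebesgue. (u x y - v x y)\<bar> \<le> 1"
    if S: "S \<in> sets unit_lebesgue" and T: "T \<in> sets unit_lebesgue" for S T
  proof -
    have "\<bar>LINT y:T|lebesgue. (u x y - v x y)\<bar> \<le> 1" if "x \<in> S" for x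
    proof -
      have "\<bar>u x y - v x y\<bar> \<le> 1" if "y \<in> T" for y
        using \<open>x \<in> S\<close> that S T by (intro uv) (auto simp: sets_unit_lebesgue_iff)
      then show ?thesis
        unfolding set_integral_unit_lebesgue[OF T]
        by (intro order_trans[OF unit_lebesgue.abs_set_integral_le_measure[OF T]]
            measure_unit_lebesgue_le_one)
    qed
    then show ?thesis
      unfolding set_integral_unit_lebesgue[OF S]
      by (intro order_trans[OF unit_lebesgue.abs_set_integral_le_measure[OF S]]
          measure_unit_lebesgue_le_one)
  qed
  show ?thesis
    unfolding cut_norm_dist_def
  proof (rule cSup_upper)
    show "bdd_above {\<bar>LINT x:S|lebesgue. LINT y:T|lebesgue. (u x y - v x y)\<bar> | S T.
        S \<in> sets lebesgue \<and> S \<subseteq> {0..1} \<and> T \<in> sets lebesgue \<and> T \<subseteq> {0..1}}"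
      using le_one by (auto simp: sets_unit_lebesgue_iff intro!: bdd_aboveI[where M=1])
  qed (use S T in \<open>auto simp: sets_unit_lebesgue_iff\<close>)
qed

lemma cut_norm_dist_nonneg:
  fixes u v :: "real \<Rightarrow> real \<Rightarrow> real"
  assumes "\<And>x y. x \<in> {0..1} \<Longrightarrow> y \<in> {0..1} \<Longrightarrow> \<bar>u x y - v x y\<bar> \<le> 1"
  shows "0 \<le> cut_norm_dist u v"
  using abs_cut_integral_le_cut_norm_dist[of u v "{}" "{}", OF assms] by simp

section \<open>Unit kernels\<close>

text \<open>
  Measurability of a graphon refers to the completed measure on the square, under which rows
  are measurable only almost everywhere. A unit kernel keeps instead a row-wise representative
  that is measurable for the product of the completed measures: this makes degree functions
  measurable, and it survives relabelling by a measure-preserving map.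
\<close>

definition unit_kernel :: "(real \<Rightarrow> real \<Rightarrow> real) \<Rightarrow> bool" where
  "unit_kernel u \<longleftrightarrow>
     (\<forall>x\<in>{0..1}. \<forall>y\<in>{0..1}. 0 \<le> u x y \<and> u x y \<le> 1) \<and>
     (\<exists>h \<in> borel_measurable (unit_lebesgue \<Otimes>\<^sub>M unit_lebesgue).
        AE x in unit_lebesgue. AE y in unit_lebesgue. u x y = h (x, y))"

lemma unit_kernel_nonneg: "unit_kernel u \<Longrightarrow> x \<in> {0..1} \<Longrightarrow> y \<in> {0..1} \<Longrightarrow> 0 \<le> u x y"
  and unit_kernel_le_one: "unit_kernel u \<Longrightarrow> x \<in> {0..1} \<Longrightarrow> y \<in> {0..1} \<Longrightarrow> u x y \<le> 1"
  by (auto simp: unit_kernel_def)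

lemma unit_kernel_abs_diff_le_one:
  "unit_kernel u \<Longrightarrow> unit_kernel v \<Longrightarrow> x \<in> {0..1} \<Longrightarrow> y \<in> {0..1} \<Longrightarrow> \<bar>u x y - v x y\<bar> \<le> 1"
  using unit_kernel_nonneg[of u x y] unit_kernel_le_one[of u x y]
    unit_kernel_nonneg[of v x y] unit_kernel_le_one[of v x y]
  by (simp add: abs_le_iff)

lemma unit_kernel_row_set_integrable:
  assumes "unit_kernel u" "x \<in> {0..1}" "u x \<in> borel_measurable unit_lebesgue"
    and "A \<in> sets unit_lebesgue"
  shows "set_integrable unit_lebesgue A (u x)"
  using assms unit_kernel_nonneg[OF assms(1)] unit_kernel_le_one[OF assms(1)]
  by (intro unit_lebesgue.set_integrable_bounded[where B=1]) auto

lemma abs_deg_on_le_measure: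
  assumes "unit_kernel u" "x \<in> {0..1}" "A \<in> sets unit_lebesgue"
  shows "\<bar>deg_on u A x\<bar> \<le> measure unit_lebesgue A"
proof -
  have "\<bar>u x y\<bar> \<le> 1" if "y \<in> A" for y
    using that assms(3) unit_kernel_nonneg[OF assms(1,2), of y] unit_kernel_le_one[OF assms(1,2), of y]
    by (auto simp: sets_unit_lebesgue_iff)
  then show ?thesis
    unfolding deg_on_unit_lebesgue[OF assms(3)]
    by (rule unit_lebesgue.abs_set_integral_le_measure[OF assms(3)])
qed

lemma deg_on_le_add_measure_Diff:
  assumes u: "unit_kernel u" and x: "x \<in> {0..1}" and row: "u x \<in> borel_measurable unit_lebesgue"
    and K: "K \<in> sets unit_lebesgue" and L: "L \<in> sets unit_lebesgue" "L \<subseteq> K"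
  shows "deg_on u K x \<le> deg_on u L x + measure unit_lebesgue (K - L)"
proof -
  have KL: "K - L \<in> sets unit_lebesgue" using K L by auto
  have "deg_on u K x = deg_on u L x + deg_on u (K - L) x"
    unfolding deg_on_unit_lebesgue[OF K] deg_on_unit_lebesgue[OF L(1)] deg_on_unit_lebesgue[OF KL]
    by (rule set_integral_Diff_split[OF unit_kernel_row_set_integrable[OF u x row K] K L])
  also have "deg_on u (K - L) x \<le> measure unit_lebesgue (K - L)"
    using abs_deg_on_le_measure[OF u x KL] by linarith
  finally show ?thesis by simp
qed

lemma AE_unit_kernel_row_measurable:
  assumes "unit_kernel u"
  shows "AE x in unit_lebesgue. u x \<in> borel_measurable unit_lebesgue"
proof -
  obtain h where h: "h \<in> borel_measurable (unit_lebesgue \<Otimes>\<^sub>M unit_lebesgue)"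
    and ae: "AE x in unit_lebesgue. AE y in unit_lebesgue. u x y = h (x, y)"
    using assms by (auto simp: unit_kernel_def)
  from ae AE_space show ?thesis
  proof eventually_elim
    case (elim x)
    then have "(\<lambda>y. h (x, y)) \<in> borel_measurable unit_lebesgue"
      using measurable_Pair2[OF h] by simp
    moreover have "AE y in unit_lebesgue. h (x, y) = u x y"
      using elim by (auto elim: eventually_mono)
    ultimately show ?case by (rule borel_measurable_unit_lebesgue_AE_cong)
  qed
qed

lemma unit_kernel_row_measurable_off_null:
  assumes "unit_kernel u"
  obtains N where "N \<in> null_sets unit_lebesgue"
    "\<And>x. x \<in> {0..1} - N \<Longrightarrow> u x \<in> borel_measurable unit_lebesgue"
proof -
  obtain N where "{x \<in> space unit_lebesgue. u x \<notin> borel_measurable unit_lebesgue} \<subseteq> N"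
    "emeasure unit_lebesgue N = 0" "N \<in> sets unit_lebesgue"
    using AE_unit_kernel_row_measurable[OF assms] by (rule AE_E)
  then show ?thesis by (intro that[of N]) auto
qed

lemma unit_kernel_deg_on_measurable:
  assumes u: "unit_kernel u" and K: "K \<in> sets unit_lebesgue"
  shows "deg_on u K \<in> borel_measurable unit_lebesgue"
proof -
  obtain h where h[measurable]: "h \<in> borel_measurable (unit_lebesgue \<Otimes>\<^sub>M unit_lebesgue)"
    and ae: "AE x in unit_lebesgue. AE y in unit_lebesgue. u x y = h (x, y)"
    using u by (auto simp: unit_kernel_def)
  have "(\<lambda>x. LINT y:K|unit_lebesgue. h (x, y)) \<in> borel_measurable unit_lebesgue"
    unfolding set_lebesgue_integral_def using K by measurable
  moreover have "AE x in unit_lebesgue. (LINT y:K|unit_lebesgue. h (x, y)) = deg_on u K x"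
    using ae AE_unit_kernel_row_measurable[OF u] AE_space
  proof eventually_elim
    case (elim x)
    have "(\<lambda>y. h (x, y)) \<in> borel_measurable unit_lebesgue"
      using measurable_Pair2[OF h] elim by simp
    then show ?case
      using elim K unfolding deg_on_unit_lebesgue[OF K]
      by (intro set_lebesgue_integral_cong_AE) (auto elim: eventually_mono)
  qed
  ultimately show ?thesis by (rule borel_measurable_unit_lebesgue_AE_cong)
qed

lemma unit_kernel_low_degree_sets:
  assumes "unit_kernel u" "K \<in> sets unit_lebesgue"
  shows "{x \<in> K. deg_on u K x < c} \<in> sets unit_lebesgue"
proof -
  note [measurable] = assms(2) unit_kernel_deg_on_measurable[OF assms]
  have "{x \<in> K. deg_on u K x < c} = K \<inter> {x \<in> space unit_lebesgue. deg_on u K x < c}"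
    using assms(2) by (auto simp: sets_unit_lebesgue_iff)
  also have "\<dots> \<in> sets unit_lebesgue" by measurable
  finally show ?thesis .
qed

lemma graphon_imp_unit_kernel:
  assumes "graphon w"
  shows "unit_kernel w"
proof -
  have "{0..1} \<times> {0..1} \<in> sets (lebesgue :: (real \<times> real) measure)"
    by (intro sets_completionI_sets) (simp add: borel_closed closed_Times)
  then have "(\<lambda>z. indicator ({0..1} \<times> {0..1}) z *\<^sub>R (case z of (x, y) \<Rightarrow> w x y)) \<in> borel_measurable lebesgue"
    using assms by (simp add: graphon_def borel_measurable_restrict_space_iff)
  then obtain g where g: "g \<in> borel_measurable lborel"
    and ae_g: "AE z in lborel. indicator ({0..1} \<times> {0..1}) z *\<^sub>R (case z of (x, y) \<Rightarrow> w x y) = g z"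
    using completion_ex_borel_measurable_real by blast
  have "AE z in lborel \<Otimes>\<^sub>M lborel.
      indicator ({0..1} \<times> {0..1}) z *\<^sub>R (case z of (x, y) \<Rightarrow> w x y) = g z"
    using ae_g by (simp only: lborel_prod)
  from lborel_pair.AE_pair[OF this]
  have "AE x in lborel. AE y in lborel. indicator ({0..1} \<times> {0..1}) (x, y) * w x y = g (x, y)"
    by simp
  from AE_unit_lebesgue_if_AE_lborel[OF this] AE_space
  have ae: "AE x in unit_lebesgue. AE y in unit_lebesgue. w x y = g (x, y)"
  proof eventually_elim
    case (elim x)
    note x = \<open>x \<in> space unit_lebesgue\<close>
    have "AE y in unit_lebesgue. indicator ({0..1} \<times> {0..1}) (x, y) * w x y = g (x, y)"
      using elim(1) by (rule AE_unit_lebesgue_if_AE_lborel)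
    with AE_space show ?case
      by eventually_elim (use x in \<open>simp add: indicator_def\<close>)
  qed
  have "(\<lambda>z. (fst z, snd z)) \<in> unit_lebesgue \<Otimes>\<^sub>M unit_lebesgue \<rightarrow>\<^sub>M borel \<Otimes>\<^sub>M borel"
    by (intro measurable_Pair measurable_compose[OF _ measurable_unit_lebesgue_borel]) auto
  then have "g \<in> borel_measurable (unit_lebesgue \<Otimes>\<^sub>M unit_lebesgue)"
    using measurable_comp[of _ _ borel g] g by (simp add: borel_prod o_def)
  then show ?thesis
    using assms ae unfolding unit_kernel_def graphon_def by blast
qed

lemma unit_kernel_compose:
  assumes u: "unit_kernel u" and \<sigma>: "measure_preserving_unit \<sigma>"
  shows "unit_kernel (\<lambda>x y. u (\<sigma> x) (\<sigma> y))"
proof -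
  obtain h where h: "h \<in> borel_measurable (unit_lebesgue \<Otimes>\<^sub>M unit_lebesgue)"
    and ae: "AE x in unit_lebesgue. AE y in unit_lebesgue. u x y = h (x, y)"
    using u by (auto simp: unit_kernel_def)
  note \<sigma>_meas = measure_preserving_unit_measurable[OF \<sigma>]
  have "(\<lambda>z. (\<sigma> (fst z), \<sigma> (snd z))) \<in> unit_lebesgue \<Otimes>\<^sub>M unit_lebesgue \<rightarrow>\<^sub>M unit_lebesgue \<Otimes>\<^sub>M unit_lebesgue"
    by (intro measurable_Pair measurable_compose[OF measurable_fst \<sigma>_meas]
        measurable_compose[OF measurable_snd \<sigma>_meas])
  from measurable_comp[OF this h]
  have meas: "(\<lambda>z. h (\<sigma> (fst z), \<sigma> (snd z))) \<in> borel_measurable (unit_lebesgue \<Otimes>\<^sub>M unit_lebesgue)"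
    by (simp add: o_def)
  have "AE x in unit_lebesgue. AE y in unit_lebesgue. u (\<sigma> x) (\<sigma> y) = h (\<sigma> x, \<sigma> y)"
    using AE_measure_preserving_unit[OF \<sigma> ae]
  proof (rule eventually_mono)
    fix x assume "AE y in unit_lebesgue. u (\<sigma> x) y = h (\<sigma> x, y)"
    then show "AE y in unit_lebesgue. u (\<sigma> x) (\<sigma> y) = h (\<sigma> x, \<sigma> y)"
      by (rule AE_measure_preserving_unit[OF \<sigma>, where P="\<lambda>y. u (\<sigma> x) y = h (\<sigma> x, y)"])
  qed
  moreover have "\<forall>x\<in>{0..1}. \<forall>y\<in>{0..1}. 0 \<le> u (\<sigma> x) (\<sigma> y) \<and> u (\<sigma> x) (\<sigma> y) \<le> 1"
    using u measure_preserving_unit_range[OF \<sigma>] by (simp add: unit_kernel_nonneg unit_kernel_le_one)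
  ultimately show ?thesis
    unfolding unit_kernel_def by (intro conjI bexI[OF _ meas]) simp_all
qed

section \<open>Cores\<close>

lemma core_iter_0 [simp]: "core_iter 0 \<kappa> u = {0..1}"
  by (simp add: core_iter_def)

lemma core_iter_Suc: "core_iter (Suc n) \<kappa> u = core_step \<kappa> u (core_iter n \<kappa> u)"
  by (simp add: core_iter_def)

lemma core_iter_Suc_subset: "core_iter (Suc n) \<kappa> u \<subseteq> core_iter n \<kappa> u"
  by (auto simp: core_iter_Suc core_step_def)

lemma core_iter_subset: "core_iter n \<kappa> u \<subseteq> {0..1}"
proof (induction n)
  case (Suc n)
  then show ?case using core_iter_Suc_subset[of n \<kappa> u] by blast
qed simp

lemma core_eq_INT: "core \<kappa> u = (\<Inter>n. core_iter n \<kappa> u)"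
proof (intro equalityI subsetI)
  fix x assume "x \<in> core \<kappa> u"
  then have "x \<in> core_iter n \<kappa> u" for n
    using core_iter_Suc_subset[of 0 \<kappa> u] by (cases n) (auto simp: core_def)
  then show "x \<in> (\<Inter>n. core_iter n \<kappa> u)" by blast
qed (auto simp: core_def)

lemma core_subset: "core \<kappa> u \<subseteq> {0..1}"
  unfolding core_eq_INT using core_iter_subset[of 0 \<kappa> u] by blast

lemma unit_kernel_core_iter_sets:
  assumes "unit_kernel u"
  shows "core_iter n \<kappa> u \<in> sets unit_lebesgue"
proof (induction n)
  case (Suc n)
  have "core_iter (Suc n) \<kappa> u = core_iter n \<kappa> u - {x \<in> core_iter n \<kappa> u. deg_on u (core_iter n \<kappa> u) x < \<kappa>}"
    by (auto simp: core_iter_Suc core_step_def)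
  then show ?case
    using Suc unit_kernel_low_degree_sets[OF assms Suc] by auto
qed simp

lemma unit_kernel_core_sets: "unit_kernel u \<Longrightarrow> core \<kappa> u \<in> sets unit_lebesgue"
  unfolding core_eq_INT by (intro sets.countable_INT) (auto intro: unit_kernel_core_iter_sets)

lemma core_zero:
  assumes "\<And>x y. x \<in> {0..1} \<Longrightarrow> y \<in> {0..1} \<Longrightarrow> 0 \<le> u x y"
  shows "core 0 u = {0..1}"
proof -
  have "core_iter n 0 u = {0..1}" for n
  proof (induction n)
    case (Suc n)
    have "0 \<le> deg_on u {0..1} x" if "x \<in> {0..1}" for x
      unfolding deg_on_def set_lebesgue_integral_def
      using assms that by (intro Bochner_Integration.integral_nonneg) (simp add: indicator_def)
    then show ?case using Suc by (auto simp: core_iter_Suc core_step_def)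
  qed simp
  then show ?thesis by (simp add: core_eq_INT)
qed

lemma image_subset_core:
  assumes u: "unit_kernel u" and \<sigma>: "measure_preserving_unit \<sigma>" and L: "L \<in> sets unit_lebesgue"
    and rows: "\<And>x. x \<in> L \<Longrightarrow> u (\<sigma> x) \<in> borel_measurable unit_lebesgue"
    and deg: "\<And>x. x \<in> L \<Longrightarrow> \<kappa> \<le> deg_on (\<lambda>x y. u (\<sigma> x) (\<sigma> y)) L x"
  shows "\<sigma> ` L \<subseteq> core \<kappa> u"
proof -
  have "\<sigma> ` L \<subseteq> core_iter n \<kappa> u" for n
  proof (induction n)
    case 0
    show ?case using L measure_preserving_unit_range[OF \<sigma>] by (auto simp: sets_unit_lebesgue_iff)
  next
    case (Suc n)
    let ?K = "core_iter n \<kappa> u"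
    have K: "?K \<in> sets unit_lebesgue" by (rule unit_kernel_core_iter_sets[OF u])
    have K\<sigma>: "\<sigma> -` ?K \<inter> {0..1} \<in> sets unit_lebesgue"
      by (rule measure_preserving_unit_vimage_sets[OF \<sigma> K])
    have L_sub: "L \<subseteq> \<sigma> -` ?K \<inter> {0..1}"
      using Suc.IH L by (auto simp: sets_unit_lebesgue_iff)
    have "\<sigma> x \<in> core_step \<kappa> u ?K" if x: "x \<in> L" for x
    proof -
      have bounded: "0 \<le> u (\<sigma> x) (\<sigma> y) \<and> u (\<sigma> x) (\<sigma> y) \<le> 1" if "y \<in> {0..1}" for y
        using unit_kernel_nonneg[OF u] unit_kernel_le_one[OF u] measure_preserving_unit_range[OF \<sigma>]
          x that L by (auto simp: sets_unit_lebesgue_iff)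
      have "(\<lambda>y. u (\<sigma> x) (\<sigma> y)) \<in> borel_measurable unit_lebesgue"
        using measurable_compose[OF measure_preserving_unit_measurable[OF \<sigma>] rows[OF x]] .
      then have int: "set_integrable unit_lebesgue (\<sigma> -` ?K \<inter> {0..1}) (\<lambda>y. u (\<sigma> x) (\<sigma> y))"
        using K\<sigma> bounded by (intro unit_lebesgue.set_integrable_bounded[where B=1]) auto
      have "\<kappa> \<le> deg_on (\<lambda>x y. u (\<sigma> x) (\<sigma> y)) L x" by (rule deg[OF x])
      also have "\<dots> \<le> deg_on (\<lambda>x y. u (\<sigma> x) (\<sigma> y)) (\<sigma> -` ?K \<inter> {0..1}) x"
        unfolding deg_on_unit_lebesgue[OF L] deg_on_unit_lebesgue[OF K\<sigma>]
        using int K\<sigma> L L_sub bounded by (intro set_integral_mono_set) auto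
      also have "\<dots> = deg_on u ?K (\<sigma> x)"
        by (rule deg_on_measure_preserving_unit[of \<sigma> u x, OF \<sigma> rows[OF x] K])
      finally show ?thesis using Suc.IH x by (auto simp: core_step_def)
    qed
    then show ?case by (auto simp: core_iter_Suc)
  qed
  then show ?thesis by (auto simp: core_eq_INT)
qed

lemma core_deg_on_core:
  assumes u: "unit_kernel u" and x: "x \<in> core \<kappa> u"
    and row: "u x \<in> borel_measurable unit_lebesgue"
  shows "\<kappa> \<le> deg_on u (core \<kappa> u) x"
proof -
  have sets: "core_iter n \<kappa> u \<in> sets unit_lebesgue" for n
    by (rule unit_kernel_core_iter_sets[OF u])
  have x01: "x \<in> {0..1}" using x core_subset by blast
  have "(\<lambda>n. LINT y:core_iter n \<kappa> u|unit_lebesgue. u x y)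
      \<longlonglongrightarrow> (LINT y:(\<Inter>n. core_iter n \<kappa> u)|unit_lebesgue. u x y)"
  proof (rule set_integral_cont_down)
    show "decseq (\<lambda>n. core_iter n \<kappa> u)" by (intro decseq_SucI core_iter_Suc_subset)
    show "set_integrable unit_lebesgue (core_iter 0 \<kappa> u) (u x)"
      using row x01 unit_kernel_nonneg[OF u] unit_kernel_le_one[OF u]
      by (intro unit_lebesgue.set_integrable_bounded[where B=1]) auto
  qed (rule sets)
  then have "(\<lambda>n. deg_on u (core_iter n \<kappa> u) x) \<longlonglongrightarrow> deg_on u (core \<kappa> u) x"
    by (simp add: deg_on_unit_lebesgue sets unit_kernel_core_sets[OF u] core_eq_INT[symmetric])
  moreover have "\<kappa> \<le> deg_on u (core_iter n \<kappa> u) x" for n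
    using x by (auto simp: core_eq_INT core_iter_Suc core_step_def dest: spec[of _ "Suc n"])
  ultimately show ?thesis by (intro LIMSEQ_le_const) auto
qed

lemma AE_core_deg_on_core:
  assumes "unit_kernel u"
  shows "AE x in unit_lebesgue. x \<in> core \<kappa> u \<longrightarrow> \<kappa> \<le> deg_on u (core \<kappa> u) x"
  using AE_unit_kernel_row_measurable[OF assms]
  by eventually_elim (auto intro: core_deg_on_core[OF assms])

lemma le_measure_core:
  assumes u: "unit_kernel u" and pos: "0 < measure unit_lebesgue (core \<kappa> u)"
  shows "\<kappa> \<le> measure unit_lebesgue (core \<kappa> u)"
proof (rule ccontr)
  let ?C = "core \<kappa> u"
  assume less: "\<not> \<kappa> \<le> measure unit_lebesgue ?C"
  have C: "?C \<in> sets unit_lebesgue" by (rule unit_kernel_core_sets[OF u])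
  have "AE x in unit_lebesgue. x \<notin> ?C"
    using AE_core_deg_on_core[OF u, of \<kappa>] AE_space
  proof eventually_elim
    case (elim x)
    then have "\<bar>deg_on u ?C x\<bar> \<le> measure unit_lebesgue ?C"
      using abs_deg_on_le_measure[OF u _ C] by simp
    then show ?case using elim less by auto
  qed
  then have "?C \<in> null_sets unit_lebesgue" using C by (simp add: AE_iff_null_sets)
  then show False using pos by (simp add: measure_eq_0_null_sets)
qed

section \<open>Cores of cut-close kernels\<close>

lemma cut_integral_eq_deg_on_diff:
  assumes u: "unit_kernel u" and v: "unit_kernel v"
    and S: "S \<in> sets unit_lebesgue" and T: "T \<in> sets unit_lebesgue"
  shows "(LINT x:S|lebesgue. LINT y:T|lebesgue. (u x y - v x y))
       = (LINT x:S|unit_lebesgue. deg_on u T x - deg_on v T x)"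
proof -
  have ae: "AE x in unit_lebesgue. deg_on u T x - deg_on v T x = (LINT y:T|lebesgue. (u x y - v x y))"
    using AE_unit_kernel_row_measurable[OF u] AE_unit_kernel_row_measurable[OF v] AE_space
  proof eventually_elim
    case (elim x)
    then show ?case
      unfolding set_integral_unit_lebesgue[OF T] deg_on_unit_lebesgue[OF T]
      using unit_kernel_row_set_integrable[OF u _ _ T] unit_kernel_row_set_integrable[OF v _ _ T]
      by (simp add: set_integral_diff)
  qed
  have meas: "(\<lambda>x. deg_on u T x - deg_on v T x) \<in> borel_measurable unit_lebesgue"
    using unit_kernel_deg_on_measurable[OF u T] unit_kernel_deg_on_measurable[OF v T] by simp
  have "(\<lambda>x. LINT y:T|lebesgue. (u x y - v x y)) \<in> borel_measurable unit_lebesgue"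
    by (rule borel_measurable_unit_lebesgue_AE_cong[OF meas ae])
  then show ?thesis
    unfolding set_integral_unit_lebesgue[OF S] using S meas ae
    by (intro set_lebesgue_integral_cong_AE) (auto elim: eventually_mono)
qed

lemma measure_low_degree_less:
  assumes u: "unit_kernel u" and v: "unit_kernel v"
    and s: "0 < s" and cut: "cut_norm_dist u v < s\<^sup>2"
    and K: "K \<in> sets unit_lebesgue"
    and K_deg: "AE x in unit_lebesgue. x \<in> K \<longrightarrow> \<kappa> \<le> deg_on u K x"
  shows "measure unit_lebesgue {x \<in> K. deg_on v K x < \<kappa> - s} < s"
proof -
  define B where "B = {x \<in> K. deg_on v K x < \<kappa> - s}"
  have B: "B \<in> sets unit_lebesgue"
    unfolding B_def by (rule unit_kernel_low_degree_sets[OF v K])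
  have "\<bar>deg_on u K x - deg_on v K x\<bar> \<le> 2" if "x \<in> {0..1}" for x
    using abs_deg_on_le_measure[OF u that K] abs_deg_on_le_measure[OF v that K]
      measure_unit_lebesgue_le_one[of K] by linarith
  then have int: "set_integrable unit_lebesgue B (\<lambda>x. deg_on u K x - deg_on v K x)"
    using B unit_kernel_deg_on_measurable[OF u K] unit_kernel_deg_on_measurable[OF v K]
    by (intro unit_lebesgue.set_integrable_bounded[where B=2]) auto
  have "s * measure unit_lebesgue B = (LINT x:B|unit_lebesgue. s)"
    using B by (simp add: set_integral_const)
  also have "\<dots> \<le> (LINT x:B|unit_lebesgue. deg_on u K x - deg_on v K x)"
  proof (rule set_integral_mono_AE[OF _ int])
    show "set_integrable unit_lebesgue B (\<lambda>_. s)"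
      using B s by (intro unit_lebesgue.set_integrable_bounded[where B=s]) auto
    show "AE x\<in>B in unit_lebesgue. s \<le> deg_on u K x - deg_on v K x"
      using K_deg by eventually_elim (auto simp: B_def)
  qed
  also have "\<dots> = (LINT x:B|lebesgue. LINT y:K|lebesgue. (u x y - v x y))"
    by (rule cut_integral_eq_deg_on_diff[OF u v B K, symmetric])
  also have "\<dots> \<le> cut_norm_dist u v"
    using abs_cut_integral_le_cut_norm_dist[of u v B K, OF unit_kernel_abs_diff_le_one[OF u v] B K]
    by linarith
  finally have "s * measure unit_lebesgue B < s * s"
    using cut by (simp add: power2_eq_square)
  then show ?thesis using s by (simp add: B_def)
qed

text \<open>The null set N lets the caller keep L away from points with non-measurable rows.\<close>

lemma cut_close_min_degree_subset:
  assumes u: "unit_kernel u" and v: "unit_kernel v"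
    and s: "0 < s" and cut: "cut_norm_dist u v < s\<^sup>2"
    and K: "K \<in> sets unit_lebesgue"
    and K_deg: "AE x in unit_lebesgue. x \<in> K \<longrightarrow> \<kappa> \<le> deg_on u K x"
    and N: "N \<in> null_sets unit_lebesgue"
  obtains L where "L \<in> sets unit_lebesgue" "L \<subseteq> K - N"
    "measure unit_lebesgue K < measure unit_lebesgue L + s"
    "\<And>x. x \<in> L \<Longrightarrow> \<kappa> - 2 * s \<le> deg_on v L x"
proof -
  define B where "B = {x \<in> K. deg_on v K x < \<kappa> - s}"
  have B: "B \<in> sets unit_lebesgue"
    unfolding B_def by (rule unit_kernel_low_degree_sets[OF v K])
  have B_less: "measure unit_lebesgue B < s"
    unfolding B_def by (rule measure_low_degree_less[OF u v s cut K K_deg])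
  obtain N' where N': "N' \<in> null_sets unit_lebesgue"
    and rows: "\<And>x. x \<in> {0..1} - N' \<Longrightarrow> v x \<in> borel_measurable unit_lebesgue"
    using unit_kernel_row_measurable_off_null[OF v] by blast
  define L where "L = K - B - (N \<union> N')"
  have null: "N \<union> N' \<in> null_sets unit_lebesgue" using N N' by auto
  have L: "L \<in> sets unit_lebesgue" and "L \<subseteq> K"
    using K B null by (auto simp: L_def)
  have "measure unit_lebesgue (K - L) \<le> measure unit_lebesgue (B \<union> (N \<union> N'))"
    using B null by (intro unit_lebesgue.finite_measure_mono) (auto simp: L_def)
  also have "\<dots> = measure unit_lebesgue B"
    by (rule measure_Un_null_set[OF B null])
  finally have KL: "measure unit_lebesgue (K - L) < s" using B_less by linarith
  show ?thesis
  proof (rule that[OF L])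
    show "L \<subseteq> K - N" by (auto simp: L_def)
    show "measure unit_lebesgue K < measure unit_lebesgue L + s"
      using KL unit_lebesgue.finite_measure_Diff[OF K L \<open>L \<subseteq> K\<close>] by linarith
  next
    fix x assume x: "x \<in> L"
    then have x01: "x \<in> {0..1}" using K by (auto simp: L_def sets_unit_lebesgue_iff)
    have row: "v x \<in> borel_measurable unit_lebesgue"
      using x x01 by (intro rows) (auto simp: L_def)
    have "\<kappa> - s \<le> deg_on v K x"
      using x by (auto simp: L_def B_def)
    also have "\<dots> \<le> deg_on v L x + measure unit_lebesgue (K - L)"
      by (rule deg_on_le_add_measure_Diff[OF v x01 row K L \<open>L \<subseteq> K\<close>])
    finally show "\<kappa> - 2 * s \<le> deg_on v L x" using KL by linarith
  qed
qed

lemma core_pos_cut_close_pullback: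
  assumes u: "unit_kernel u" and v: "unit_kernel v" and \<sigma>: "measure_preserving_unit \<sigma>"
    and s: "0 < s" and cut: "cut_norm_dist (\<lambda>x y. u (\<sigma> x) (\<sigma> y)) v < s\<^sup>2"
    and \<kappa>: "2 * s < \<kappa>" and pos: "0 < emeasure lebesgue (core \<kappa> u)"
  shows "0 < emeasure lebesgue (core (\<kappa> - 2 * s) v)"
proof -
  let ?C = "core \<kappa> u" and ?D = "core (\<kappa> - 2 * s) v"
  define K where "K = \<sigma> -` ?C \<inter> {0..1}"
  have C: "?C \<in> sets unit_lebesgue" by (rule unit_kernel_core_sets[OF u])
  have D: "?D \<in> sets unit_lebesgue" by (rule unit_kernel_core_sets[OF v])
  have K: "K \<in> sets unit_lebesgue"
    unfolding K_def by (rule measure_preserving_unit_vimage_sets[OF \<sigma> C])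
  have "measure unit_lebesgue K = measure unit_lebesgue ?C"
    unfolding K_def by (rule measure_vimage_measure_preserving_unit[OF \<sigma> C])
  also have "\<kappa> \<le> measure unit_lebesgue ?C"
    using le_measure_core[OF u] pos emeasure_lebesgue_pos_iff[OF C] by blast
  finally have K_large: "\<kappa> \<le> measure unit_lebesgue K" .
  have "AE x in unit_lebesgue. x \<in> K \<longrightarrow> \<kappa> \<le> deg_on (\<lambda>x y. u (\<sigma> x) (\<sigma> y)) K x"
    using AE_measure_preserving_unit[OF \<sigma> AE_core_deg_on_core[OF u, of \<kappa>]]
      AE_measure_preserving_unit[OF \<sigma> AE_unit_kernel_row_measurable[OF u]]
    by eventually_elim (simp add: K_def deg_on_measure_preserving_unit[OF \<sigma> _ C])
  moreover obtain N where N: "N \<in> null_sets unit_lebesgue"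
    and rows: "\<And>x. x \<in> {0..1} - N \<Longrightarrow> v x \<in> borel_measurable unit_lebesgue"
    using unit_kernel_row_measurable_off_null[OF v] by blast
  ultimately obtain L where L: "L \<in> sets unit_lebesgue" and L_sub: "L \<subseteq> K - N"
    and L_large: "measure unit_lebesgue K < measure unit_lebesgue L + s"
    and L_deg: "\<And>x. x \<in> L \<Longrightarrow> \<kappa> - 2 * s \<le> deg_on v L x"
    using cut_close_min_degree_subset[OF unit_kernel_compose[OF u \<sigma>] v s cut K] by blast
  have "(\<lambda>x. x) ` L \<subseteq> ?D"
    using L_sub K L_deg by (intro image_subset_core[OF v measure_preserving_unit_id L] rows)
      (auto simp: sets_unit_lebesgue_iff)
  then have "measure unit_lebesgue L \<le> measure unit_lebesgue ?D"
    using D by (intro unit_lebesgue.finite_measure_mono) auto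
  then show ?thesis
    using emeasure_lebesgue_pos_iff[OF D] K_large L_large \<kappa> s by linarith
qed

lemma core_pos_cut_close_pushforward:
  assumes u: "unit_kernel u" and v: "unit_kernel v" and \<sigma>: "measure_preserving_unit \<sigma>"
    and s: "0 < s" and cut: "cut_norm_dist (\<lambda>x y. u (\<sigma> x) (\<sigma> y)) v < s\<^sup>2"
    and \<kappa>: "2 * s < \<kappa>" and pos: "0 < emeasure lebesgue (core \<kappa> v)"
  shows "0 < emeasure lebesgue (core (\<kappa> - 2 * s) u)"
proof -
  let ?K = "core \<kappa> v" and ?C = "core (\<kappa> - 2 * s) u"
  have K: "?K \<in> sets unit_lebesgue" by (rule unit_kernel_core_sets[OF v])
  have C: "?C \<in> sets unit_lebesgue" by (rule unit_kernel_core_sets[OF u])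
  have K_large: "\<kappa> \<le> measure unit_lebesgue ?K"
    using le_measure_core[OF v] pos emeasure_lebesgue_pos_iff[OF K] by blast
  obtain N where N: "N \<in> null_sets unit_lebesgue"
    and rows: "\<And>x. x \<in> {0..1} - N \<Longrightarrow> u x \<in> borel_measurable unit_lebesgue"
    using unit_kernel_row_measurable_off_null[OF u] by blast
  have cut': "cut_norm_dist v (\<lambda>x y. u (\<sigma> x) (\<sigma> y)) < s\<^sup>2"
    using cut by (simp add: cut_norm_dist_commute)
  obtain L where L: "L \<in> sets unit_lebesgue" and L_sub: "L \<subseteq> ?K - (\<sigma> -` N \<inter> {0..1})"
    and L_large: "measure unit_lebesgue ?K < measure unit_lebesgue L + s"
    and L_deg: "\<And>x. x \<in> L \<Longrightarrow> \<kappa> - 2 * s \<le> deg_on (\<lambda>x y. u (\<sigma> x) (\<sigma> y)) L x"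
    using cut_close_min_degree_subset[OF v unit_kernel_compose[OF u \<sigma>] s cut' K
        AE_core_deg_on_core[OF v] null_sets_vimage_measure_preserving_unit[OF \<sigma> N]] by blast
  have "\<sigma> ` L \<subseteq> ?C"
    using L_sub K L_deg measure_preserving_unit_range[OF \<sigma>]
    by (intro image_subset_core[OF u \<sigma> L] rows) (auto simp: sets_unit_lebesgue_iff)
  then have "L \<subseteq> \<sigma> -` ?C \<inter> {0..1}"
    using L_sub K by (auto simp: sets_unit_lebesgue_iff)
  then have "measure unit_lebesgue L \<le> measure unit_lebesgue (\<sigma> -` ?C \<inter> {0..1})"
    using measure_preserving_unit_vimage_sets[OF \<sigma> C]
    by (intro unit_lebesgue.finite_measure_mono) auto
  also have "\<dots> = measure unit_lebesgue ?C"
    by (rule measure_vimage_measure_preserving_unit[OF \<sigma> C])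
  finally show ?thesis
    using emeasure_lebesgue_pos_iff[OF C] K_large L_large \<kappa> s by linarith
qed

section \<open>Degeneracy\<close>

lemma le_degeneracy:
  assumes "\<kappa> \<in> {0..1}" "0 < emeasure lebesgue (core \<kappa> u)"
  shows "\<kappa> \<le> degeneracy u"
  unfolding degeneracy_def using assms by (intro cSup_upper) (auto intro: bdd_aboveI[where M=1])

lemma degeneracy_nonneg:
  assumes "\<And>x y. x \<in> {0..1} \<Longrightarrow> y \<in> {0..1} \<Longrightarrow> 0 \<le> u x y"
  shows "0 \<le> degeneracy u"
  using le_degeneracy[of 0 u] core_zero[of u, OF assms] by simp

lemma degeneracy_le_add:
  assumes u: "\<And>x y. x \<in> {0..1} \<Longrightarrow> y \<in> {0..1} \<Longrightarrow> 0 \<le> u x y"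
    and v: "\<And>x y. x \<in> {0..1} \<Longrightarrow> y \<in> {0..1} \<Longrightarrow> 0 \<le> v x y"
    and d: "0 \<le> d"
    and transfer: "\<And>\<kappa>. d < \<kappa> \<Longrightarrow> 0 < emeasure lebesgue (core \<kappa> u) \<Longrightarrow>
      0 < emeasure lebesgue (core (\<kappa> - d) v)"
  shows "degeneracy u \<le> degeneracy v + d"
  unfolding degeneracy_def[of u]
proof (rule cSup_least)
  have "0 \<in> {\<kappa> \<in> {0..1}. 0 < emeasure lebesgue (core \<kappa> u)}"
    using core_zero[of u, OF u] by simp
  then show "{\<kappa> \<in> {0..1}. 0 < emeasure lebesgue (core \<kappa> u)} \<noteq> {}" by blast
  fix \<kappa> assume \<kappa>: "\<kappa> \<in> {\<kappa> \<in> {0..1}. 0 < emeasure lebesgue (core \<kappa> u)}"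
  show "\<kappa> \<le> degeneracy v + d"
  proof (cases "d < \<kappa>")
    case True
    then have "\<kappa> - d \<le> degeneracy v"
      using \<kappa> d transfer by (intro le_degeneracy) auto
    then show ?thesis by simp
  next
    case False
    then show ?thesis using degeneracy_nonneg[of v, OF v] by simp
  qed
qed

lemma abs_degeneracy_diff_le:
  assumes "graphon w" "graphon w'" and \<sigma>: "measure_preserving_unit \<sigma>"
  shows "\<bar>degeneracy w - degeneracy w'\<bar> \<le> 2 * sqrt (cut_norm_dist (\<lambda>x y. w (\<sigma> x) (\<sigma> y)) w')"
proof -
  let ?c = "cut_norm_dist (\<lambda>x y. w (\<sigma> x) (\<sigma> y)) w'"
  have u: "unit_kernel w" and v: "unit_kernel w'"
    using assms by (simp_all add: graphon_imp_unit_kernel)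
  have c: "0 \<le> ?c"
    by (rule cut_norm_dist_nonneg)
      (rule unit_kernel_abs_diff_le_one[OF unit_kernel_compose[OF u \<sigma>] v])
  have "\<bar>degeneracy w - degeneracy w'\<bar> \<le> 2 * sqrt ?c + e" if e: "0 < e" for e
  proof -
    define s where "s = sqrt ?c + e / 2"
    have s: "0 < s" unfolding s_def using e real_sqrt_ge_zero[OF c] by linarith
    have "sqrt ?c < s" using e by (simp add: s_def)
    then have "(sqrt ?c)\<^sup>2 < s\<^sup>2"
      using c by (intro power_strict_mono) simp_all
    then have cut: "?c < s\<^sup>2"
      using c by simp
    have "degeneracy w \<le> degeneracy w' + 2 * s"
      using core_pos_cut_close_pullback[OF u v \<sigma> s cut] s
      by (intro degeneracy_le_add unit_kernel_nonneg[OF u] unit_kernel_nonneg[OF v]) auto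
    moreover have "degeneracy w' \<le> degeneracy w + 2 * s"
      using core_pos_cut_close_pushforward[OF u v \<sigma> s cut] s
      by (intro degeneracy_le_add unit_kernel_nonneg[OF u] unit_kernel_nonneg[OF v]) auto
    ultimately show ?thesis by (simp add: s_def)
  qed
  then show ?thesis by (rule field_le_epsilon)
qed

theorem lemma6:
  fixes w w' :: "real \<Rightarrow> real \<Rightarrow> real"
  assumes "graphon w" and "graphon w'"
  shows "\<bar>degeneracy w - degeneracy w'\<bar> \<le> 2 * sqrt (cut_metric w w')"
proof -
  let ?D = "\<bar>degeneracy w - degeneracy w'\<bar>"
  have "(?D / 2)\<^sup>2 \<le> cut_metric w w'"
    unfolding cut_metric_def
  proof (rule cInf_greatest)
    show "{cut_norm_dist (\<lambda>x y. w (\<sigma> x) (\<sigma> y)) w' |\<sigma>. measure_preserving_unit \<sigma>} \<noteq> {}"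
      using measure_preserving_unit_id by blast
    fix c assume "c \<in> {cut_norm_dist (\<lambda>x y. w (\<sigma> x) (\<sigma> y)) w' |\<sigma>. measure_preserving_unit \<sigma>}"
    then have "?D \<le> 2 * sqrt c"
      using abs_degeneracy_diff_le[OF assms] by auto
    then have le_sqrt: "?D / 2 \<le> sqrt c" by simp
    moreover have "0 \<le> ?D / 2" by simp
    ultimately have "0 \<le> sqrt c" by linarith
    then have "0 \<le> c" by simp
    have "(?D / 2)\<^sup>2 \<le> (sqrt c)\<^sup>2"
      using le_sqrt by (intro power_mono) simp_all
    then show "(?D / 2)\<^sup>2 \<le> c" using \<open>0 \<le> c\<close> by simp
  qed
  then have "?D / 2 \<le> sqrt (cut_metric w w')" by (rule real_le_rsqrt)
  then show ?thesis by simp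
qed

end
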